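(* With $\mathcal I$, $\nu$, $L$, $V_L^*$, $q_{L-1}$, $V_{L-1}^*$ and $\xi$ as defined in the context, for every $\mathbf m\in\mathbb R^{\mathcal I}$ and $a\in\mathcal I$, $$q_{L-1}(\mathbf m,a)=\frac{\xi(a;\mathbf m)}{\sum_{l\in\mathcal I}e^{m[l]}},$$ and consequently $$V_{L-1}^*(\mathbf m)=\frac{1}{\sum_{l\in\mathcal I}e^{m[l]}}\Big[e^{m[x_{[1]}]}+h(\nu)\exp\Big\{\frac{m[x_{[2]}]-\nu m[x_{[1]}]}{1-\nu}\Big\}\Big],$$ where $m[x_{[1]}]\ge m[x_{[2]}]$ are the largest and second-largest entries of $\mathbf m$ (counted with multiplicity).
   Context: $\mathcal I$ is a finite set with $|\mathcal I|\ge2$, $\nu\in(0,1)$, $J(y)=(1-\nu)y+\ln\nu$. $V_L^*(\mathbf m)=\max_{a\in\mathcal I}e^{m[a]}/\sum_{l}e^{m[l]}$; $q_{L-1}(\mathbf m,a)=\int_0^\infty V_L^*(\mathbf m+J(y)\boldsymbol\delta[a])\,f(y\mid\mathbf m,a)\,dy$ with $\boldsymbol\delta[a]$ the indicator vector of $a$ and $f(y\mid\mathbf m,a)=p_a\nu e^{-\nu y}+(1-p_a)e^{-y}$, $p_a=e^{m[a]}/\sum_l e^{m[l]}$; $V_{L-1}^*(\mathbf m)=\max_a q_{L-1}(\mathbf m,a)$. With $M_a=\max_{\hat a\neq a}m[\hat a]$: $\xi(a;\mathbf m)=e^{m[a]}$ if $M_a-m[a]<\ln\nu$, and otherwise $\xi(a;\mathbf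 m)=e^{M_a}+h(\nu)\exp\{\frac{m[a]-\nu M_a}{1-\nu}\}$, where $h(\nu)=\exp\{\frac{\nu\ln\nu}{1-\nu}\}-\exp\{\frac{\ln\nu}{1-\nu}\}$. *)

theory Defs
  imports "HOL-Analysis.Analysis"
begin

definition Jfun :: "real \<Rightarrow> real \<Rightarrow> real" where
  "Jfun \<nu> y = (1 - \<nu>) * y + ln \<nu>"

definition hfun :: "real \<Rightarrow> real" where
  "hfun \<nu> = exp (\<nu> * ln \<nu> / (1 - \<nu>)) - exp (ln \<nu> / (1 - \<nu>))"

definition softmax :: "('i::finite \<Rightarrow> real) \<Rightarrow> 'i \<Rightarrow> real" where
  "softmax m a = exp (m a) / (\<Sum>l\<in>UNIV. exp (m l))"

definition VL :: "('i::finite \<Rightarrow> real) \<Rightarrow> real" where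
  "VL m = Max (range (\<lambda>a. softmax m a))"

definition delta :: "'i \<Rightarrow> 'i \<Rightarrow> real" where
  "delta a = (\<lambda>l. if l = a then 1 else 0)"

definition fdens :: "real \<Rightarrow> ('i::finite \<Rightarrow> real) \<Rightarrow> 'i \<Rightarrow> real \<Rightarrow> real" where
  "fdens \<nu> m a y = softmax m a * \<nu> * exp (- \<nu> * y) + (1 - softmax m a) * exp (- y)"

definition qLm1 :: "real \<Rightarrow> ('i::finite \<Rightarrow> real) \<Rightarrow> 'i \<Rightarrow> real" where
  "qLm1 \<nu> m a = (LINT y:{0..}|lborel. VL (\<lambda>l. m l + Jfun \<nu> y * delta a l) * fdens \<nu> m a y)"

definition VLm1 :: "real \<Rightarrow> ('i::finite \<Rightarrow> real) \<Rightarrow> real" where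
  "VLm1 \<nu> m = Max (range (\<lambda>a. qLm1 \<nu> m a))"

definition Mother :: "('i::finite \<Rightarrow> real) \<Rightarrow> 'i \<Rightarrow> real" where
  "Mother m a = Max (m ` (UNIV - {a}))"

definition xi :: "real \<Rightarrow> ('i::finite \<Rightarrow> real) \<Rightarrow> 'i \<Rightarrow> real" where
  "xi \<nu> m a = (if Mother m a - m a < ln \<nu> then exp (m a)
     else exp (Mother m a) + hfun \<nu> * exp ((m a - \<nu> * Mother m a) / (1 - \<nu>)))"

end

theory Submission
  imports Defs
begin

(* After raising coordinate a by J(y), the density f(y | m, a) is e^{-y} times the ratio of the
   new to the old partition function, so the integrand of q_{L-1}(m, a) collapses to
   max(nu e^{m[a] - nu y}, e^{M_a - y}) / sum_l e^{m[l]}.  Integrating this maximum of two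
   exponentials, split at their crossing point, gives xi(a; m).
   Away from the argmax x_[1], xi(a; m) increases with m[a], so x_[2] can only be beaten by
   x_[1].  With r = e^{m[x_[1]] - m[x_[2]]} in [1, 1/nu] and k = 1/(1 - nu), the inequality
   xi(x_[1]) <= xi(x_[2]) says that the convex function h(nu)(r^k - r^{1-k}) + 1 - r is
   non-positive; it vanishes at r = 1 and equals -h(nu) nu^{k-1} at r = 1/nu. *)

lemma hfun_powr:
  assumes "0 < \<nu>"
  shows "hfun \<nu> = \<nu> powr (\<nu> / (1 - \<nu>)) - \<nu> powr (1 / (1 - \<nu>))"
  using assms by (simp add: hfun_def powr_def mult.commute)

lemma hfun_nonneg:
  assumes "0 < \<nu>" "\<nu> < 1"
  shows "0 \<le> hfun \<nu>"
proof -
  have "1 / (1 - \<nu>) \<ge> \<nu> / (1 - \<nu>)" using assms by (simp add: divide_right_mono)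
  then show ?thesis using assms by (simp add: hfun_powr powr_mono')
qed

lemma convex_on_powr_sub_powr:
  fixes k :: real
  assumes "1 \<le> k"
  shows "convex_on {1..} (\<lambda>r. r powr k - r powr (1 - k))"
proof (rule f''_ge0_imp_convex)
  fix r :: real assume "r \<in> {1..}"
  then have r: "1 \<le> r" by simp
  show "((\<lambda>r. r powr k - r powr (1 - k)) has_real_derivative
      k * r powr (k - 1) - (1 - k) * r powr (- k)) (at r)"
    using r by (auto intro!: derivative_eq_intros)
  show "((\<lambda>r. k * r powr (k - 1) - (1 - k) * r powr (- k)) has_real_derivative
      k * (k - 1) * (r powr (k - 2) - r powr (- k - 1))) (at r)"
    using r by (auto intro!: derivative_eq_intros simp: algebra_simps)
  have "r powr (- k - 1) \<le> r powr (k - 2)" using r assms by (intro powr_mono) auto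
  then show "0 \<le> k * (k - 1) * (r powr (k - 2) - r powr (- k - 1))"
    using assms by simp
qed simp

lemma hfun_exchange_powr:
  fixes \<nu> r :: real
  assumes \<nu>: "0 < \<nu>" "\<nu> < 1" and r: "1 \<le> r" "r \<le> 1 / \<nu>"
  shows "1 + hfun \<nu> * r powr (1 / (1 - \<nu>)) \<le> r + hfun \<nu> * r powr (1 - 1 / (1 - \<nu>))"
proof -
  define k where "k = 1 / (1 - \<nu>)"
  define g where "g r = hfun \<nu> * (r powr k - r powr (1 - k)) + 1 - r" for r
  have k: "1 \<le> k" using \<nu> by (simp add: k_def)
  have "convex_on {1..} g"
    unfolding g_def
    by (intro convex_on_diff convex_on_add convex_on_cmul hfun_nonneg convex_on_powr_sub_powr
        \<nu> k concave_on_ident[THEN iffD2]) (auto simp: convex_on_const)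
  then have "convex_on {1..1/\<nu>} g" by (rule convex_on_subset) auto
  then have "g r \<le> max (g 1) (g (1 / \<nu>))" using r by (intro convex_on_le_max) auto
  moreover have "g 1 = 0" by (simp add: g_def)
  moreover have "g (1 / \<nu>) = - hfun \<nu> * \<nu> powr (k - 1)"
  proof -
    have "\<nu> * k - k = -1" using \<nu> unfolding k_def by (simp add: divide_simps)
    have "hfun \<nu> = \<nu> powr (\<nu> * k) - \<nu> powr k"
      using \<nu> by (simp add: hfun_powr k_def)
    then have "hfun \<nu> * \<nu> powr (- k) = \<nu> powr (\<nu> * k - k) - \<nu> powr (k - k)"
      using \<nu> by (simp add: left_diff_distrib powr_add[symmetric])
    also have "\<dots> = 1 / \<nu> - 1"
      using \<open>\<nu> * k - k = -1\<close> \<nu> by (simp add: powr_minus_divide)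
    finally have "hfun \<nu> * \<nu> powr (- k) = 1 / \<nu> - 1" .
    moreover have "(1 / \<nu>) powr k = \<nu> powr (- k)" "(1 / \<nu>) powr (1 - k) = \<nu> powr (k - 1)"
      using \<nu> by (simp_all add: powr_divide flip: powr_minus_divide)
    ultimately show ?thesis by (simp add: g_def algebra_simps)
  qed
  ultimately have "g r \<le> 0" using hfun_nonneg[OF \<nu>] by simp
  then show ?thesis by (simp add: g_def k_def algebra_simps)
qed

lemma hfun_exchange:
  fixes \<nu> m1 m2 :: real
  assumes \<nu>: "0 < \<nu>" "\<nu> < 1" and gap: "m2 \<le> m1" "m1 \<le> m2 - ln \<nu>"
  shows "exp m2 + hfun \<nu> * exp ((m1 - \<nu> * m2) / (1 - \<nu>))
       \<le> exp m1 + hfun \<nu> * exp ((m2 - \<nu> * m1) / (1 - \<nu>))"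
proof -
  define r where "r = exp (m1 - m2)"
  have "r \<le> exp (- ln \<nu>)" using gap by (simp add: r_def)
  then have "r \<le> 1 / \<nu>" using \<nu> by (simp add: exp_minus inverse_eq_divide)
  moreover have "1 \<le> r" using gap by (simp add: r_def)
  ultimately have "1 + hfun \<nu> * r powr (1 / (1 - \<nu>)) \<le> r + hfun \<nu> * r powr (1 - 1 / (1 - \<nu>))"
    using hfun_exchange_powr[OF \<nu>] by blast
  then have "exp m2 * (1 + hfun \<nu> * r powr (1 / (1 - \<nu>)))
      \<le> exp m2 * (r + hfun \<nu> * r powr (1 - 1 / (1 - \<nu>)))" by simp
  moreover have "exp m2 * r powr a = exp (m2 + a * (m1 - m2))" for a
    by (simp add: r_def powr_def exp_add)
  moreover have "m2 + 1 / (1 - \<nu>) * (m1 - m2) = (m1 - \<nu> * m2) / (1 - \<nu>)"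
    "m2 + (1 - 1 / (1 - \<nu>)) * (m1 - m2) = (m2 - \<nu> * m1) / (1 - \<nu>)"
    using \<nu> by (simp_all add: field_simps)
  moreover have "exp m2 * r = exp m1" by (simp add: r_def flip: exp_add)
  ultimately show ?thesis
    by (simp only: distrib_left mult.left_commute[of "exp m2"] mult_1_right)
qed

lemma has_integral_exp_tail:
  fixes \<nu> u c :: real
  assumes "0 < \<nu>"
  shows "((\<lambda>y. \<nu> * exp (u - \<nu> * y)) has_integral exp (u - \<nu> * c)) {c..}"
proof -
  have "((\<lambda>y. (\<nu> * exp u) * exp (- \<nu> * y)) has_integral (\<nu> * exp u) * (exp (- \<nu> * c) / \<nu>)) {c..}"
    by (intro has_integral_mult_right has_integral_exp_minus_to_infinity assms)
  then show ?thesis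
    using assms by (simp add: exp_diff exp_minus field_simps)
qed

lemma scaled_exp_le_exp_iff:
  fixes \<nu> u w y :: real
  assumes "0 < \<nu>" "\<nu> < 1"
  shows "\<nu> * exp (u - \<nu> * y) \<le> exp (w - y) \<longleftrightarrow> y \<le> (w - u - ln \<nu>) / (1 - \<nu>)"
proof -
  have "\<nu> * exp (u - \<nu> * y) = exp (ln \<nu> + (u - \<nu> * y))" using assms by (simp add: exp_add)
  then have "\<nu> * exp (u - \<nu> * y) \<le> exp (w - y) \<longleftrightarrow> (1 - \<nu>) * y \<le> w - u - ln \<nu>"
    by (simp add: algebra_simps)
  also have "\<dots> \<longleftrightarrow> y \<le> (w - u - ln \<nu>) / (1 - \<nu>)"
    using assms by (simp add: pos_le_divide_eq mult.commute)
  finally show ?thesis .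
qed

lemma exp_crossing_value:
  fixes \<nu> u w :: real
  assumes "0 < \<nu>" "\<nu> < 1"
  defines "y\<^sub>0 \<equiv> (w - u - ln \<nu>) / (1 - \<nu>)"
  shows "exp w - exp (w - y\<^sub>0) + exp (u - \<nu> * y\<^sub>0) = exp w + hfun \<nu> * exp ((u - \<nu> * w) / (1 - \<nu>))"
proof -
  have "1 - \<nu> \<noteq> 0" using assms by simp
  then have c: "(1 - \<nu>) * y\<^sub>0 = w - u - ln \<nu>" by (simp add: y\<^sub>0_def)
  have "(w - y\<^sub>0) * (1 - \<nu>) = w * (1 - \<nu>) - (1 - \<nu>) * y\<^sub>0"
    "(u - \<nu> * y\<^sub>0) * (1 - \<nu>) = u * (1 - \<nu>) - \<nu> * ((1 - \<nu>) * y\<^sub>0)"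
    by (simp_all add: algebra_simps)
  then have "(w - y\<^sub>0) * (1 - \<nu>) = u - \<nu> * w + ln \<nu>"
    "(u - \<nu> * y\<^sub>0) * (1 - \<nu>) = u - \<nu> * w + \<nu> * ln \<nu>"
    unfolding c by (simp_all add: algebra_simps)
  then have split: "w - y\<^sub>0 = (u - \<nu> * w) / (1 - \<nu>) + ln \<nu> / (1 - \<nu>)"
       "u - \<nu> * y\<^sub>0 = (u - \<nu> * w) / (1 - \<nu>) + \<nu> * ln \<nu> / (1 - \<nu>)"
    using \<open>1 - \<nu> \<noteq> 0\<close> by (simp_all add: eq_divide_eq flip: add_divide_distrib)
  show ?thesis unfolding split hfun_def exp_add by (simp add: algebra_simps)
qed

lemma has_integral_max_exp:
  fixes \<nu> u w :: real
  assumes \<nu>: "0 < \<nu>" "\<nu> < 1"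
  shows "((\<lambda>y. max (\<nu> * exp (u - \<nu> * y)) (exp (w - y))) has_integral
     (if w - u < ln \<nu> then exp u else exp w + hfun \<nu> * exp ((u - \<nu> * w) / (1 - \<nu>)))) {0..}"
proof -
  define y\<^sub>0 where "y\<^sub>0 = (w - u - ln \<nu>) / (1 - \<nu>)"
  note crossing = scaled_exp_le_exp_iff[OF \<nu>, of u _ w, folded y\<^sub>0_def]
  have tail: "((\<lambda>y. max (\<nu> * exp (u - \<nu> * y)) (exp (w - y))) has_integral exp (u - \<nu> * c)) {c..}"
    if "y\<^sub>0 \<le> c" for c
  proof (rule has_integral_spike[OF negligible_sing[of y\<^sub>0] _ has_integral_exp_tail[OF \<nu>(1)]])
    show "max (\<nu> * exp (u - \<nu> * y)) (exp (w - y)) = \<nu> * exp (u - \<nu> * y)"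
      if "y \<in> {c..} - {y\<^sub>0}" for y
      using that \<open>y\<^sub>0 \<le> c\<close> crossing[of y] by (auto simp: max_def)
  qed
  show ?thesis
  proof (cases "w - u < ln \<nu>")
    case True
    then have "y\<^sub>0 \<le> 0" using \<nu> by (simp add: y\<^sub>0_def divide_nonpos_pos)
    with tail[of 0] True show ?thesis by simp
  next
    case False
    then have "0 \<le> y\<^sub>0" using \<nu> by (simp add: y\<^sub>0_def)
    have "((\<lambda>y. exp (w - y)) has_integral (- exp (w - y\<^sub>0)) - (- exp (w - 0))) {0..y\<^sub>0}"
      using \<open>0 \<le> y\<^sub>0\<close> by (intro fundamental_theorem_of_calculus)
        (auto intro!: derivative_eq_intros simp flip: has_real_derivative_iff_has_vector_derivative)
    then have "((\<lambda>y. exp (w - y)) has_integral exp w - exp (w - y\<^sub>0)) {0..y\<^sub>0}" by simp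
    then have head: "((\<lambda>y. max (\<nu> * exp (u - \<nu> * y)) (exp (w - y))) has_integral
        exp w - exp (w - y\<^sub>0)) {0..y\<^sub>0}"
      by (rule has_integral_eq[rotated]) (use crossing in \<open>auto simp: max_def\<close>)
    have "((\<lambda>y. max (\<nu> * exp (u - \<nu> * y)) (exp (w - y))) has_integral
        exp w - exp (w - y\<^sub>0) + exp (u - \<nu> * y\<^sub>0)) ({0..y\<^sub>0} \<union> {y\<^sub>0..})"
      by (rule has_integral_Un[OF head tail]) (auto intro: negligible_subset[of "{y\<^sub>0}"])
    moreover have "{0..y\<^sub>0} \<union> {y\<^sub>0..} = {0..}" using \<open>0 \<le> y\<^sub>0\<close> by auto
    ultimately show ?thesis
      using False exp_crossing_value[OF \<nu>, of w u, folded y\<^sub>0_def] by simp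
  qed
qed

lemma set_lebesgue_integral_eq_has_integral:
  fixes f :: "real \<Rightarrow> real"
  assumes "continuous_on UNIV f" and "\<And>x. x \<in> A \<Longrightarrow> 0 \<le> f x"
    and I: "(f has_integral I) A" and "A \<in> sets borel"
  shows "(LINT x:A|lborel. f x) = I"
proof -
  have "f absolutely_integrable_on A"
    using assms by (intro nonnegative_absolutely_integrable_1) (auto simp: has_integral_integrable)
  then have "integrable lebesgue (\<lambda>x. indicator A x *\<^sub>R f x)" by (simp add: set_integrable_def)
  moreover have "(\<lambda>x. indicator A x *\<^sub>R f x) \<in> borel_measurable lborel"
    using borel_measurable_continuous_onI[OF assms(1)] assms(4) by measurable
  ultimately have "set_integrable lborel A f"
    unfolding set_integrable_def using integrable_completion by blast
  then show ?thesis using I by (simp add: set_borel_integral_eq_integral(2) integral_unique)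
qed

lemma VL_eq_max_Mother:
  fixes m :: "'i::finite \<Rightarrow> real"
  assumes "UNIV - {a} \<noteq> {}"
  shows "VL m = max (exp (m a)) (exp (Mother m a)) / (\<Sum>l\<in>UNIV. exp (m l))"
proof -
  define S where "S = (\<Sum>l\<in>UNIV. exp (m l))"
  have "S > 0" unfolding S_def by (intro sum_pos) auto
  then have mono: "mono (\<lambda>x. exp x / S)" by (auto intro!: monoI divide_right_mono)
  have "range (\<lambda>l. exp (m l) / S) = insert (exp (m a) / S) ((\<lambda>x. exp x / S) ` m ` (UNIV - {a}))"
    by auto
  then have "VL m = max (exp (m a) / S) (Max ((\<lambda>x. exp x / S) ` m ` (UNIV - {a})))"
    using assms by (simp add: VL_def softmax_def S_def)
  also have "Max ((\<lambda>x. exp x / S) ` m ` (UNIV - {a})) = exp (Mother m a) / S"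
    unfolding Mother_def using assms by (subst mono_Max_commute[OF mono]) auto
  finally show ?thesis using \<open>S > 0\<close> by (simp add: S_def max_divide_distrib_right)
qed

lemma Mother_cong:
  assumes "\<And>l. l \<noteq> a \<Longrightarrow> m' l = m l"
  shows "Mother m' a = Mother m a"
  unfolding Mother_def using assms by (metis (no_types, lifting) DiffD2 image_cong singletonI)

lemma exp_add_Jfun:
  assumes "0 < \<nu>"
  shows "exp (x + Jfun \<nu> y) = \<nu> * exp (x + (1 - \<nu>) * y)"
proof -
  have "x + Jfun \<nu> y = ln \<nu> + (x + (1 - \<nu>) * y)" by (simp add: Jfun_def)
  then show ?thesis using assms by (simp only: exp_add exp_ln)
qed

lemma fdens_eq_partition_ratio:
  fixes m :: "'i::finite \<Rightarrow> real"
  assumes "0 < \<nu>"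
  shows "fdens \<nu> m a y = exp (- y) * (\<Sum>l\<in>UNIV. exp (m l + Jfun \<nu> y * delta a l))
                           / (\<Sum>l\<in>UNIV. exp (m l))"
proof -
  define S where "S = (\<Sum>l\<in>UNIV. exp (m l))"
  define B where "B = (\<Sum>l\<in>UNIV - {a}. exp (m l))"
  have "S > 0" unfolding S_def by (intro sum_pos) auto
  have "S = exp (m a) + B" unfolding S_def B_def by (rule sum.remove) auto
  have "(\<Sum>l\<in>UNIV. exp (m l + Jfun \<nu> y * delta a l))
      = exp (m a + Jfun \<nu> y) + (\<Sum>l\<in>UNIV - {a}. exp (m l + Jfun \<nu> y * delta a l))"
    by (subst sum.remove[of _ a]) (auto simp: delta_def)
  also have "(\<Sum>l\<in>UNIV - {a}. exp (m l + Jfun \<nu> y * delta a l)) = B"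
    unfolding B_def by (rule sum.cong) (auto simp: delta_def)
  also have "exp (m a + Jfun \<nu> y) = \<nu> * exp (m a) * exp ((1 - \<nu>) * y)"
    unfolding exp_add_Jfun[OF assms] by (simp add: exp_add)
  finally have "exp (- y) * (\<Sum>l\<in>UNIV. exp (m l + Jfun \<nu> y * delta a l))
      = exp (m a) * \<nu> * exp (- \<nu> * y) + B * exp (- y)"
    by (simp add: algebra_simps flip: exp_add)
  moreover have "1 - exp (m a) / S = B / S"
    using \<open>S > 0\<close> \<open>S = exp (m a) + B\<close> by (simp add: field_simps)
  then have "fdens \<nu> m a y = exp (m a) / S * \<nu> * exp (- \<nu> * y) + B / S * exp (- y)"
    by (simp add: fdens_def softmax_def S_def)
  ultimately show ?thesis
    by (simp add: S_def add_divide_distrib)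
qed

lemma qLm1_integrand_eq:
  fixes m :: "'i::finite \<Rightarrow> real"
  assumes "UNIV - {a} \<noteq> {}" and "0 < \<nu>"
  shows "VL (\<lambda>l. m l + Jfun \<nu> y * delta a l) * fdens \<nu> m a y
       = max (\<nu> * exp (m a - \<nu> * y)) (exp (Mother m a - y)) / (\<Sum>l\<in>UNIV. exp (m l))"
proof -
  define m' where "m' = (\<lambda>l. m l + Jfun \<nu> y * delta a l)"
  define S' where "S' = (\<Sum>l\<in>UNIV. exp (m' l))"
  have "S' > 0" unfolding S'_def by (intro sum_pos) auto
  have "Mother m' a = Mother m a" by (rule Mother_cong) (simp add: m'_def delta_def)
  then have VL: "VL m' = max (exp (m' a)) (exp (Mother m a)) / S'"
    using VL_eq_max_Mother[OF assms(1)] by (simp add: S'_def)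
  have fdens: "fdens \<nu> m a y = exp (- y) * S' / (\<Sum>l\<in>UNIV. exp (m l))"
    using fdens_eq_partition_ratio[OF assms(2)] by (simp add: S'_def m'_def)
  have "exp (m' a) * exp (- y) = \<nu> * exp (m a - \<nu> * y)"
    using assms(2) by (simp add: m'_def delta_def exp_add_Jfun algebra_simps flip: exp_add)
  moreover have "exp (Mother m a) * exp (- y) = exp (Mother m a - y)"
    by (simp flip: exp_add)
  moreover have "VL m' * fdens \<nu> m a y
      = max (exp (m' a)) (exp (Mother m a)) * exp (- y) / (\<Sum>l\<in>UNIV. exp (m l))"
    unfolding VL fdens using \<open>S' > 0\<close> by simp
  ultimately show ?thesis by (simp add: m'_def max_mult_distrib_right)
qed

lemma qLm1_eq_xi:
  fixes m :: "'i::finite \<Rightarrow> real"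
  assumes "UNIV - {a} \<noteq> {}" and \<nu>: "0 < \<nu>" "\<nu> < 1"
  shows "qLm1 \<nu> m a = xi \<nu> m a / (\<Sum>l\<in>UNIV. exp (m l))"
proof -
  define S where "S = (\<Sum>l\<in>UNIV. exp (m l))"
  have "S > 0" unfolding S_def by (intro sum_pos) auto
  define g where "g y = max (\<nu> * exp (m a - \<nu> * y)) (exp (Mother m a - y)) / S" for y
  have "qLm1 \<nu> m a = (LINT y:{0..}|lborel. g y)"
    unfolding qLm1_def g_def S_def using qLm1_integrand_eq[OF assms(1,2)]
    by (intro set_lebesgue_integral_cong) auto
  also have "\<dots> = xi \<nu> m a / S"
  proof (rule set_lebesgue_integral_eq_has_integral)
    show "continuous_on UNIV g" unfolding g_def using \<open>S > 0\<close> by (intro continuous_intros) auto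
    show "0 \<le> g y" for y unfolding g_def using \<open>S > 0\<close> \<nu> by (auto simp: max_def)
    show "(g has_integral xi \<nu> m a / S) {0..}"
      unfolding g_def xi_def using has_integral_divide[OF has_integral_max_exp[OF \<nu>]]
      by simp
  qed simp
  finally show ?thesis unfolding S_def .
qed

lemma Mother_argmax:
  fixes m :: "'i::finite \<Rightarrow> real"
  assumes "m x1 = Max (range m)" and "a \<noteq> x1"
  shows "Mother m a = m x1"
  unfolding Mother_def
proof (rule Max_eqI)
  show "m x1 \<in> m ` (UNIV - {a})" using assms(2) by blast
qed (use assms(1) in auto)

lemma xi_off_argmax:
  fixes m :: "'i::finite \<Rightarrow> real"
  assumes "0 < \<nu>" "\<nu> < 1" and "m x1 = Max (range m)" and "a \<noteq> x1"
  shows "xi \<nu> m a = exp (m x1) + hfun \<nu> * exp ((m a - \<nu> * m x1) / (1 - \<nu>))"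
proof -
  have "m a \<le> m x1" using assms(3) by simp
  moreover have "ln \<nu> < 0" using assms(1,2) by simp
  ultimately show ?thesis using Mother_argmax[OF assms(3,4)] by (simp add: xi_def)
qed

lemma xi_argmax_le_second:
  fixes m :: "'i::finite \<Rightarrow> real"
  assumes \<nu>: "0 < \<nu>" "\<nu> < 1" and x1: "m x1 = Max (range m)"
    and x2: "x2 \<noteq> x1" "m x2 = Max (m ` (UNIV - {x1}))"
  shows "xi \<nu> m x1 \<le> xi \<nu> m x2"
proof -
  have "Mother m x1 = m x2" using x2 by (simp add: Mother_def)
  have second: "xi \<nu> m x2 = exp (m x1) + hfun \<nu> * exp ((m x2 - \<nu> * m x1) / (1 - \<nu>))"
    by (rule xi_off_argmax[OF \<nu> x1 x2(1)])
  show ?thesis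
  proof (cases "m x2 - m x1 < ln \<nu>")
    case True
    then show ?thesis
      using hfun_nonneg[OF \<nu>] unfolding second by (simp add: xi_def \<open>Mother m x1 = m x2\<close>)
  next
    case False
    moreover have "m x2 \<le> m x1" using x1 by simp
    ultimately show ?thesis
      using hfun_exchange[OF \<nu>, of "m x2" "m x1"]
      unfolding second by (simp add: xi_def \<open>Mother m x1 = m x2\<close>)
  qed
qed

lemma xi_le_second:
  fixes m :: "'i::finite \<Rightarrow> real"
  assumes \<nu>: "0 < \<nu>" "\<nu> < 1" and x1: "m x1 = Max (range m)"
    and x2: "x2 \<noteq> x1" "m x2 = Max (m ` (UNIV - {x1}))"
  shows "xi \<nu> m a \<le> xi \<nu> m x2"
proof (cases "a = x1")
  case True
  then show ?thesis using xi_argmax_le_second[OF assms] by simp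
next
  case False
  then have "m a \<le> m x2" using x2(2) by simp
  then have "exp ((m a - \<nu> * m x1) / (1 - \<nu>)) \<le> exp ((m x2 - \<nu> * m x1) / (1 - \<nu>))"
    using \<nu> by (simp add: divide_right_mono)
  then show ?thesis
    using xi_off_argmax[OF \<nu> x1 False] xi_off_argmax[OF \<nu> x1 x2(1)] hfun_nonneg[OF \<nu>]
    by (simp add: mult_left_mono)
qed

theorem mainTheorem4:
  fixes \<nu> :: real and m :: "'i::finite \<Rightarrow> real"
  assumes "CARD('i) \<ge> 2" and "0 < \<nu>" and "\<nu> < 1"
  shows "(\<forall>a. qLm1 \<nu> m a = xi \<nu> m a / (\<Sum>l\<in>UNIV. exp (m l))) \<and>
         (\<forall>x1 x2. x1 \<noteq> x2 \<longrightarrow> m x1 = Max (range m) \<longrightarrow> m x2 = Max (m ` (UNIV - {x1})) \<longrightarrow>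
            VLm1 \<nu> m = (exp (m x1) + hfun \<nu> * exp ((m x2 - \<nu> * m x1) / (1 - \<nu>)))
                         / (\<Sum>l\<in>UNIV. exp (m l)))"
proof (intro conjI allI impI)
  have "UNIV - {a} \<noteq> {}" for a :: 'i
  proof
    assume "UNIV - {a} = {}"
    then have "CARD('i) \<le> card {a}" by (intro card_mono) auto
    with assms(1) show False by simp
  qed
  then show q: "qLm1 \<nu> m a = xi \<nu> m a / (\<Sum>l\<in>UNIV. exp (m l))" for a
    using qLm1_eq_xi assms(2,3) by blast
  fix x1 x2 :: 'i
  assume x12: "x1 \<noteq> x2" and x1: "m x1 = Max (range m)" and x2: "m x2 = Max (m ` (UNIV - {x1}))"
  have "xi \<nu> m a / (\<Sum>l\<in>UNIV. exp (m l)) \<le> xi \<nu> m x2 / (\<Sum>l\<in>UNIV. exp (m l))" for a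
    using xi_le_second[OF assms(2,3) x1 x12[symmetric] x2]
    by (intro divide_right_mono) (auto intro: sum_nonneg)
  then have "VLm1 \<nu> m = xi \<nu> m x2 / (\<Sum>l\<in>UNIV. exp (m l))"
    unfolding VLm1_def q by (intro Max_eqI) auto
  then show "VLm1 \<nu> m = (exp (m x1) + hfun \<nu> * exp ((m x2 - \<nu> * m x1) / (1 - \<nu>)))
                         / (\<Sum>l\<in>UNIV. exp (m l))"
    using xi_off_argmax[OF assms(2,3) x1 x12[symmetric]] by simp
qed

end
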